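(* Let $d\ge1$, $1\le p<q<\infty$, and let $f(x):=|x|^{-d/q}$ for $x\in\mathbb{R}^d\setminus\{0\}$ ($|x|$ the Euclidean norm). Define $g:=\chi_{\{|x|<1\}}f$, $h:=f-g=\chi_{\{|x|\ge1\}}f$, and $k:=-f+2g$. Then $$\|f\|_{\mathcal{M}^p_q}=\|g\|_{\mathcal{M}^p_q}=\|h\|_{\mathcal{M}^p_q}=\|k\|_{\mathcal{M}^p_q}\in(0,\infty).$$
   Context: For $1\le p\le q<\infty$, the Morrey space $\mathcal{M}^p_q=\mathcal{M}^p_q(\mathbb{R}^d)$ is the Banach space of all measurable functions $f$ on $\mathbb{R}^d$ with $$\|f\|_{\mathcal{M}^p_q}:=\sup_{B=B(a,r)}|B|^{\frac1q-\frac1p}\Big(\int_B|f(y)|^p\,dy\Big)^{1/p}<\infty,$$ the supremum taken over all Euclidean balls $B(a,r)$ with center $a\in\mathbb{R}^d$ and radius $r>0$, and $|B|$ the Lebesgue measure of $B$. *)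

theory Defs
  imports "HOL-Analysis.Analysis"
begin

definition morrey_local :: "('a::euclidean_space \<Rightarrow> real) \<Rightarrow> real \<Rightarrow> real \<Rightarrow> 'a \<Rightarrow> real \<Rightarrow> ennreal" where
  "morrey_local f p q a r =
     (let I = (\<integral>\<^sup>+ y\<in>ball a r. ennreal (\<bar>f y\<bar> powr p) \<partial>lebesgue)
      in if I = \<infinity> then \<infinity>
         else ennreal ((measure lebesgue (ball a r)) powr (1/q - 1/p) * (enn2real I) powr (1/p)))"

definition morrey_norm :: "('a::euclidean_space \<Rightarrow> real) \<Rightarrow> real \<Rightarrow> real \<Rightarrow> ennreal" where
  "morrey_norm f p q = (SUP a. SUP r\<in>{0<..}. morrey_local f p q a r)"

end

theory Submission
  imports Defs
begin

text \<open>
  With \<open>\<alpha> = d p / q\<close> one has \<open>|f|^p = |x|^(-\<alpha>)\<close> and \<open>0 < \<alpha> < d\<close>. The integral of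
  \<open>|x|^(-\<alpha>)\<close> over a ball is finite and gains a factor \<open>t^(d-\<alpha>)\<close> when the ball is dilated
  by \<open>t\<close>, while \<open>|B|^(1/q-1/p)\<close> gains \<open>t^(-(d-\<alpha>)/p)\<close>: the Morrey quantity of \<open>f\<close> on a ball
  is invariant under dilations. Every ball dilates into the unit ball, where \<open>g = f\<close>; and
  dilating a ball by a large factor makes the unit ball, the only place where \<open>h \<noteq> f\<close>,
  negligible. With \<open>|g|, |h| \<le> |f| = |k|\<close> this gives the equalities. Finiteness reduces by
  dilation to balls of radius 1, over which the integral is at most the volume of the ball
  plus the integral over the unit ball.
\<close>

lemma nn_integral_lebesgue_scaleR:
  fixes f :: "'a::euclidean_space \<Rightarrow> ennreal"
  assumes f[measurable]: "f \<in> borel_measurable lebesgue" and t: "t \<noteq> 0"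
  shows "(\<integral>\<^sup>+x. f x \<partial>lebesgue) = ennreal (\<bar>t\<bar> ^ DIM('a)) * (\<integral>\<^sup>+x. f (t *\<^sub>R x) \<partial>lebesgue)"
proof -
  let ?c = "ennreal (\<bar>t\<bar> ^ DIM('a))"
  have L: "lebesgue = density (distr lebesgue lebesgue (\<lambda>x::'a. t *\<^sub>R x)) (\<lambda>_. ?c)"
    using lebesgue_affine_euclidean[where c="\<lambda>_::'a. t" and t=0] t
    unfolding scaleR_scaleR[symmetric] scaleR_sum_right[symmetric] euclidean_representation
    by (simp add: prod_constant)
  have "(\<integral>\<^sup>+x. f x \<partial>lebesgue) = (\<integral>\<^sup>+x. f x \<partial>density (distr lebesgue lebesgue (\<lambda>x::'a. t *\<^sub>R x)) (\<lambda>_. ?c))"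
    using L by simp
  also have "\<dots> = \<integral>\<^sup>+ x. ?c * f x \<partial>distr lebesgue lebesgue (\<lambda>x. t *\<^sub>R x)"
    by (subst nn_integral_density) auto
  also have "\<dots> = ?c * integral\<^sup>N (distr lebesgue lebesgue (\<lambda>x::'a. t *\<^sub>R x)) f"
    using f measurable_distr_eq1 nn_integral_cmult by blast
  also have "\<dots> = ?c * (\<integral>\<^sup>+x. f (t *\<^sub>R x) \<partial>lebesgue)"
    by (subst nn_integral_distr) auto
  finally show ?thesis .
qed

lemma indicator_ball_scaleR:
  fixes a x :: "'a::real_normed_vector"
  assumes "0 < t"
  shows "indicator (ball (t *\<^sub>R a) (t * r)) (t *\<^sub>R x) = (indicator (ball a r) x :: ennreal)"
proof -
  have "dist (t *\<^sub>R a) (t *\<^sub>R x) = t * dist a x"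
    using assms by (simp add: dist_norm flip: scaleR_diff_right)
  then show ?thesis using assms by (simp add: indicator_def)
qed

lemma measure_lebesgue_ball:
  assumes "0 \<le> r"
  shows "measure lebesgue (ball (a::'a::euclidean_space) r) = r ^ DIM('a) * measure lebesgue (ball (0::'a) 1)"
  using content_ball_conv_unit_ball[OF assms, of a] by simp

lemma measure_lebesgue_ball_scaleR:
  assumes "0 < t" and "0 \<le> r"
  shows "measure lebesgue (ball (t *\<^sub>R a) (t * r)) = t ^ DIM('a) * measure lebesgue (ball (a::'a::euclidean_space) r)"
  using measure_lebesgue_ball[of "t * r" "t *\<^sub>R a"] measure_lebesgue_ball[of r a] assms
  by (simp add: power_mult_distrib)

lemma emeasure_lebesgue_ball:
  "emeasure lebesgue (ball (a::'a::euclidean_space) r) = ennreal (measure lebesgue (ball a r))"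
  using lmeasurable_ball by (simp add: emeasure_eq_measure2)

lemma ball_in_sets_lebesgue[measurable]: "ball (a::'a::euclidean_space) r \<in> sets lebesgue"
  using lmeasurable_ball by (simp add: fmeasurable_def)

section \<open>Integrals of negative powers of the norm\<close>

definition norm_weight :: "real \<Rightarrow> 'a::euclidean_space \<Rightarrow> ennreal" where
  "norm_weight \<alpha> y = ennreal (norm y powr (- \<alpha>))"

definition weight_integral :: "real \<Rightarrow> 'a::euclidean_space \<Rightarrow> real \<Rightarrow> ennreal" where
  "weight_integral \<alpha> a r = (\<integral>\<^sup>+ y\<in>ball a r. norm_weight \<alpha> y \<partial>lebesgue)"

lemma norm_weight_measurable[measurable]: "norm_weight \<alpha> \<in> borel_measurable lebesgue"
  unfolding norm_weight_def[abs_def] by (intro measurable_completion) measurable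

lemma norm_weight_le_one:
  assumes "0 \<le> \<alpha>" and "1 \<le> norm y"
  shows "norm_weight \<alpha> y \<le> 1"
proof -
  have "norm y powr (- \<alpha>) \<le> 1 powr (- \<alpha>)"
    using assms by (intro powr_mono2') auto
  then show ?thesis by (simp add: norm_weight_def)
qed

lemma weight_integral_mono:
  assumes "ball a r \<subseteq> ball b s"
  shows "weight_integral \<alpha> a r \<le> weight_integral \<alpha> b s"
  unfolding weight_integral_def using assms
  by (intro nn_integral_mono) (auto simp: indicator_def)

lemma weight_integral_scaleR:
  fixes a :: "'a::euclidean_space"
  assumes t: "0 < t"
  shows "weight_integral \<alpha> (t *\<^sub>R a) (t * r) = ennreal (t powr (real DIM('a) - \<alpha>)) * weight_integral \<alpha> a r"
proof -
  have weight: "norm_weight \<alpha> (t *\<^sub>R x) = ennreal (t powr (- \<alpha>)) * norm_weight \<alpha> x" for x :: 'a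
    using t by (simp add: norm_weight_def powr_mult ennreal_mult)
  have "weight_integral \<alpha> (t *\<^sub>R a) (t * r) = ennreal (t ^ DIM('a)) *
      (\<integral>\<^sup>+x. norm_weight \<alpha> (t *\<^sub>R x) * indicator (ball (t *\<^sub>R a) (t * r)) (t *\<^sub>R x) \<partial>lebesgue)"
    unfolding weight_integral_def using t by (subst nn_integral_lebesgue_scaleR[of _ t]) auto
  also have "\<dots> = ennreal (t ^ DIM('a)) *
      (\<integral>\<^sup>+x. ennreal (t powr (- \<alpha>)) * (norm_weight \<alpha> x * indicator (ball a r) x) \<partial>lebesgue)"
    by (simp only: weight indicator_ball_scaleR[OF t] mult.assoc)
  also have "\<dots> = ennreal (t ^ DIM('a) * t powr (- \<alpha>)) * weight_integral \<alpha> a r"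
    unfolding weight_integral_def using t by (simp add: nn_integral_cmult ennreal_mult mult.assoc)
  also have "t ^ DIM('a) * t powr (- \<alpha>) = t powr (real DIM('a) - \<alpha>)"
    using t by (simp add: powr_realpow[symmetric] powr_add[symmetric])
  finally show ?thesis .
qed

lemma exists_dyadic_radius:
  fixes n \<alpha> :: real
  assumes "0 < n" and "n < 1" and "0 < \<alpha>"
  obtains k :: nat where "n < 2 powr (1 - real k)" and "n powr (- \<alpha>) \<le> 2 powr (\<alpha> * (real k + 1))"
proof
  define L where "L = - log 2 n"
  define k where "k = nat \<lfloor>L\<rfloor>"
  have "0 < L" using assms by (simp add: L_def)
  then have k: "real k \<le> L" "L < real k + 1"
    by (auto simp: k_def)
  have n: "n = 2 powr (- L)" using assms by (simp add: L_def)
  have "n \<le> 2 powr (- real k)" unfolding n by (rule powr_mono) (use k in auto)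
  also have "\<dots> < 2 powr (1 - real k)" by (rule powr_less_mono) auto
  finally show "n < 2 powr (1 - real k)" .
  have "n powr (- \<alpha>) = 2 powr (\<alpha> * L)" unfolding n by (simp add: powr_powr mult.commute)
  also have "\<dots> \<le> 2 powr (\<alpha> * (real k + 1))"
    by (rule powr_mono) (use k assms in auto)
  finally show "n powr (- \<alpha>) \<le> 2 powr (\<alpha> * (real k + 1))" .
qed

text \<open>Cover the unit ball by the balls of radius \<open>2^(1-k)\<close>, the \<open>k\<close>-th carrying the weight
  \<open>2^(\<alpha>(k+1))\<close>; the resulting series is geometric with ratio \<open>2^(\<alpha>-d) < 1\<close>.\<close>

lemma weight_integral_unit_ball_finite:
  assumes "0 < \<alpha>" and "\<alpha> < real DIM('a)"
  shows "weight_integral \<alpha> (0::'a::euclidean_space) 1 < \<infinity>"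
proof -
  define d where "d = real DIM('a)"
  define \<rho> where "\<rho> = (2::real) powr (\<alpha> - d)"
  define V1 where "V1 = measure lebesgue (ball (0::'a) 1)"
  define T where "T k y = ennreal (2 powr (\<alpha> * (real k + 1))) * indicator (ball (0::'a) (2 powr (1 - real k))) y" for k y
  have [measurable]: "T k \<in> borel_measurable lebesgue" for k
    unfolding T_def[abs_def] by measurable
  have cover: "norm_weight \<alpha> y * indicator (ball 0 1) y \<le> (\<Sum>k. T k y)" for y
  proof (cases "y \<in> ball 0 1 \<and> y \<noteq> 0")
    case True
    then obtain k where "norm y < 2 powr (1 - real k)" and "norm y powr (- \<alpha>) \<le> 2 powr (\<alpha> * (real k + 1))"
      using exists_dyadic_radius[of "norm y" \<alpha>] assms by auto
    then have "norm_weight \<alpha> y * indicator (ball 0 1) y \<le> T k y"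
      by (simp add: T_def norm_weight_def indicator_def ennreal_leI)
    also have "T k y \<le> (\<Sum>k. T k y)"
      using sum_le_suminf[of "\<lambda>k. T k y" "{k}"] by (simp add: summableI)
    finally show ?thesis .
  qed (auto simp: norm_weight_def indicator_def)
  have T_integral: "(\<integral>\<^sup>+y. T k y \<partial>lebesgue) = ennreal (2 powr (\<alpha> + d) * V1 * \<rho> ^ k)" for k
  proof -
    have exponents: "(2::real) powr (\<alpha> * (real k + 1)) * (2 powr (1 - real k)) ^ DIM('a) = 2 powr (\<alpha> + d) * \<rho> ^ k"
      by (simp add: \<rho>_def d_def powr_power powr_add[symmetric] algebra_simps)
    have "(\<integral>\<^sup>+y. T k y \<partial>lebesgue)
        = ennreal (2 powr (\<alpha> * (real k + 1))) * emeasure lebesgue (ball (0::'a) (2 powr (1 - real k)))"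
      unfolding T_def by (simp add: nn_integral_cmult_indicator)
    also have "\<dots> = ennreal (2 powr (\<alpha> * (real k + 1)) * (2 powr (1 - real k)) ^ DIM('a) * V1)"
      using measure_lebesgue_ball[of "2 powr (1 - real k)" "0::'a"]
      by (simp add: emeasure_lebesgue_ball V1_def ennreal_mult mult.assoc)
    finally show ?thesis
      unfolding exponents by (simp add: mult_ac)
  qed
  have "\<rho> < 2 powr 0" unfolding \<rho>_def by (rule powr_less_mono) (use assms in \<open>auto simp: d_def\<close>)
  then have "summable (\<lambda>k. 2 powr (\<alpha> + d) * V1 * \<rho> ^ k)"
    by (intro summable_mult summable_geometric) (auto simp: \<rho>_def)
  have "weight_integral \<alpha> (0::'a) 1 \<le> (\<integral>\<^sup>+y. (\<Sum>k. T k y) \<partial>lebesgue)"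
    unfolding weight_integral_def by (intro nn_integral_mono cover)
  also have "\<dots> = (\<Sum>k. ennreal (2 powr (\<alpha> + d) * V1 * \<rho> ^ k))"
    by (simp add: nn_integral_suminf T_integral)
  also have "\<dots> = ennreal (\<Sum>k. 2 powr (\<alpha> + d) * V1 * \<rho> ^ k)"
    using \<open>summable _\<close> by (intro suminf_ennreal2) (auto simp: V1_def \<rho>_def)
  finally show ?thesis
    using order.strict_trans1 by fastforce
qed

lemma weight_integral_finite:
  assumes "0 < \<alpha>" and "\<alpha> < real DIM('a)"
  shows "weight_integral \<alpha> (a::'a::euclidean_space) r < \<infinity>"
proof (cases "0 < r")
  case True
  define R where "R = norm a + r"
  have R: "0 < R" using True by (simp add: R_def add_nonneg_pos)
  have "ball a r \<subseteq> ball (R *\<^sub>R 0) (R * 1)"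
  proof
    fix y assume "y \<in> ball a r"
    then show "y \<in> ball (R *\<^sub>R 0) (R * 1)"
      using norm_triangle_sub[of y a] by (simp add: R_def dist_norm norm_minus_commute)
  qed
  then have "weight_integral \<alpha> a r \<le> ennreal (R powr (real DIM('a) - \<alpha>)) * weight_integral \<alpha> (0::'a) 1"
    by (metis weight_integral_mono weight_integral_scaleR[OF R])
  also have "\<dots> < \<infinity>"
    using weight_integral_unit_ball_finite[OF assms] by (simp add: ennreal_mult_less_top)
  finally show ?thesis .
qed (auto simp: weight_integral_def ball_empty)

lemma weight_integral_le_outer_part:
  fixes a :: "'a::euclidean_space"
  shows "weight_integral \<alpha> a r \<le>
     (\<integral>\<^sup>+ y\<in>ball a r. norm_weight \<alpha> y * indicator (- ball 0 1) y \<partial>lebesgue) + weight_integral \<alpha> (0::'a) 1"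
proof -
  have "weight_integral \<alpha> a r \<le> (\<integral>\<^sup>+ y. norm_weight \<alpha> y * indicator (- ball 0 1) y * indicator (ball a r) y
      + norm_weight \<alpha> y * indicator (ball 0 1) y \<partial>lebesgue)"
    unfolding weight_integral_def by (intro nn_integral_mono) (auto simp: indicator_def)
  also have "\<dots> = (\<integral>\<^sup>+ y\<in>ball a r. norm_weight \<alpha> y * indicator (- ball 0 1) y \<partial>lebesgue)
      + weight_integral \<alpha> (0::'a) 1"
    unfolding weight_integral_def by (rule nn_integral_add) auto
  finally show ?thesis .
qed

section \<open>Morrey quantities\<close>

definition local_integral :: "('a::euclidean_space \<Rightarrow> real) \<Rightarrow> real \<Rightarrow> 'a \<Rightarrow> real \<Rightarrow> ennreal" where
  "local_integral u p a r = (\<integral>\<^sup>+ y\<in>ball a r. ennreal (\<bar>u y\<bar> powr p) \<partial>lebesgue)"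

lemma morrey_local_conv_local_integral:
  "morrey_local u p q a r = (if local_integral u p a r = \<infinity> then \<infinity> else
     ennreal (measure lebesgue (ball a r) powr (1/q - 1/p) * enn2real (local_integral u p a r) powr (1/p)))"
  by (simp add: morrey_local_def local_integral_def Let_def)

lemma morrey_local_le_morrey_norm:
  "0 < r \<Longrightarrow> morrey_local u p q a r \<le> morrey_norm u p q"
  unfolding morrey_norm_def by (intro SUP_upper2[of a] SUP_upper2[of r]) auto

lemma morrey_local_mono:
  assumes p: "0 < p" and uv: "\<And>y. \<bar>u y\<bar> \<le> \<bar>v y\<bar>"
  shows "morrey_local u p q a r \<le> morrey_local v p q a r"
proof -
  have J: "local_integral u p a r \<le> local_integral v p a r"
    unfolding local_integral_def using p uv
    by (intro nn_integral_mono mult_right_mono ennreal_leI powr_mono2) auto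
  show ?thesis
  proof (cases "local_integral v p a r = \<infinity>")
    case False
    with J have "enn2real (local_integral u p a r) powr (1/p) \<le> enn2real (local_integral v p a r) powr (1/p)"
      using p by (intro powr_mono2 enn2real_mono) (auto simp: top.not_eq_extremum)
    then show ?thesis using False J
      by (auto simp: morrey_local_conv_local_integral top_unique intro!: ennreal_leI mult_left_mono)
  qed (simp add: morrey_local_conv_local_integral)
qed

lemma morrey_norm_mono:
  assumes "0 < p" and "\<And>y. \<bar>u y\<bar> \<le> \<bar>v y\<bar>"
  shows "morrey_norm u p q \<le> morrey_norm v p q"
  unfolding morrey_norm_def by (intro SUP_mono' morrey_local_mono[OF assms])

lemma morrey_norm_cong_abs:
  assumes "\<And>y. \<bar>u y\<bar> = \<bar>v y\<bar>"
  shows "morrey_norm u p q = morrey_norm v p q"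
  unfolding morrey_norm_def morrey_local_def assms ..

locale critical_power =
  fixes u :: "'a::euclidean_space \<Rightarrow> real" and p q \<alpha> :: real
  assumes power_profile: "\<And>y. ennreal (\<bar>u y\<bar> powr p) = norm_weight \<alpha> y"
    and p_pos: "0 < p" and p_less_q: "p < q"
    and alpha_eq: "\<alpha> = real DIM('a) * p / q"
begin

lemma alpha_pos: "0 < \<alpha>"
  using p_pos p_less_q by (simp add: alpha_eq DIM_positive)

lemma alpha_less_DIM: "\<alpha> < real DIM('a)"
  using p_pos p_less_q by (simp add: alpha_eq pos_divide_less_eq DIM_positive)

lemma exponent_identity: "real DIM('a) * (1/q - 1/p) = (\<alpha> - real DIM('a)) / p"
  using p_pos p_less_q by (simp add: alpha_eq field_simps)

lemma weight_integral_less_top: "weight_integral \<alpha> (a::'a) r < \<infinity>"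
  using weight_integral_finite[OF alpha_pos alpha_less_DIM] .

lemma morrey_local_eq:
  "morrey_local u p q a r =
     ennreal (measure lebesgue (ball a r) powr (1/q - 1/p) * enn2real (weight_integral \<alpha> a r) powr (1/p))"
proof -
  have "local_integral u p a r = weight_integral \<alpha> a r"
    by (simp add: local_integral_def weight_integral_def power_profile)
  then show ?thesis
    using weight_integral_less_top[of a r] by (simp add: morrey_local_conv_local_integral)
qed

lemma morrey_local_scaleR:
  assumes t: "0 < t" and r: "0 < r"
  shows "morrey_local u p q (t *\<^sub>R a) (t * r) = morrey_local u p q a r"
proof -
  define d where "d = real DIM('a)"
  define e where "e = 1/q - 1/p"
  define A where "A = enn2real (weight_integral \<alpha> a r)"
  define V where "V = measure lebesgue (ball a r)"
  have "(t ^ DIM('a)) powr e * t powr ((d - \<alpha>) * (1/p)) = t powr (d * e + (d - \<alpha>) / p)"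
    using t by (simp add: powr_realpow[symmetric] powr_powr powr_add d_def)
  also have "\<dots> = 1"
    using t exponent_identity by (simp add: d_def e_def diff_divide_distrib)
  finally have t_factor: "(t ^ DIM('a)) powr e * t powr ((d - \<alpha>) * (1/p)) = 1" .
  have "(t ^ DIM('a) * V) powr e * (t powr (d - \<alpha>) * A) powr (1/p)
      = ((t ^ DIM('a)) powr e * t powr ((d - \<alpha>) * (1/p))) * (V powr e * A powr (1/p))"
    unfolding powr_mult by (simp add: powr_powr ac_simps V_def A_def)
  then show ?thesis
    using t_factor measure_lebesgue_ball_scaleR[OF t less_imp_le[OF r], of a] t
    by (simp add: morrey_local_eq weight_integral_scaleR enn2real_mult d_def e_def A_def V_def)
qed

lemma morrey_norm_finite: "morrey_norm u p q < \<infinity>"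
proof -
  define e where "e = 1/q - 1/p"
  define V1 where "V1 = measure lebesgue (ball (0::'a) 1)"
  define c where "c = enn2real (weight_integral \<alpha> (0::'a) 1)"
  have unit_radius: "morrey_local u p q b 1 \<le> ennreal (V1 powr e * (V1 + c) powr (1/p))" for b
  proof -
    let ?outer = "\<integral>\<^sup>+ y\<in>ball b 1. norm_weight \<alpha> y * indicator (- ball 0 1) y \<partial>lebesgue"
    have "?outer \<le> (\<integral>\<^sup>+ y. indicator (ball b 1) y \<partial>lebesgue)"
    proof (intro nn_integral_mono)
      fix y
      show "norm_weight \<alpha> y * indicator (- ball 0 1) y * indicator (ball b 1) y \<le> indicator (ball b 1) y"
        using norm_weight_le_one[of \<alpha> y] alpha_pos by (cases "norm y < 1") (auto simp: indicator_def)
    qed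
    then have outer: "?outer \<le> emeasure lebesgue (ball b 1)"
      by simp
    have "weight_integral \<alpha> b 1 \<le> ?outer + weight_integral \<alpha> (0::'a) 1"
      by (rule weight_integral_le_outer_part)
    also have "\<dots> \<le> emeasure lebesgue (ball b 1) + weight_integral \<alpha> (0::'a) 1"
      using outer by (rule add_right_mono)
    also have "\<dots> = ennreal (V1 + c)"
    proof -
      have "emeasure lebesgue (ball b 1) = ennreal V1"
        using measure_lebesgue_ball[of 1 b] by (simp add: emeasure_lebesgue_ball V1_def)
      moreover have "weight_integral \<alpha> (0::'a) 1 = ennreal c"
        using weight_integral_less_top[of 0 1] by (simp add: c_def less_top)
      moreover have "0 \<le> V1" and "0 \<le> c"
        by (simp_all add: V1_def c_def)
      ultimately show ?thesis
        by (simp add: ennreal_plus)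
    qed
    finally have "enn2real (weight_integral \<alpha> b 1) \<le> V1 + c"
      by (intro enn2real_leI) (simp_all add: V1_def c_def)
    then show ?thesis
      using p_pos measure_lebesgue_ball[of 1 b]
      by (auto simp: morrey_local_eq e_def V1_def intro!: ennreal_leI mult_left_mono powr_mono2)
  qed
  have "morrey_local u p q a r \<le> ennreal (V1 powr e * (V1 + c) powr (1/p))" if "0 < r" for a r
    using unit_radius[of "(1/r) *\<^sub>R a"] morrey_local_scaleR[of r 1 "(1/r) *\<^sub>R a"] that by simp
  then have "morrey_norm u p q \<le> ennreal (V1 powr e * (V1 + c) powr (1/p))"
    unfolding morrey_norm_def by (intro SUP_least) auto
  then show ?thesis using order.strict_trans1 by fastforce
qed

lemma morrey_norm_pos: "0 < morrey_norm u p q"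
proof -
  obtain a :: 'a where a: "norm a = 1/2"
    using vector_choose_size[of "1/2"] by auto
  define V where "V = measure lebesgue (ball a (1/4))"
  have "0 < V" unfolding V_def using content_ball_pos[of "1/4" a] by simp
  have "emeasure lebesgue (ball a (1/4)) \<le> weight_integral \<alpha> a (1/4)"
    unfolding weight_integral_def
  proof (subst nn_integral_indicator[symmetric], simp, intro nn_integral_mono)
    fix y
    show "indicator (ball a (1/4)) y \<le> norm_weight \<alpha> y * indicator (ball a (1/4)) y"
    proof (cases "y \<in> ball a (1/4)")
      case True
      then have "0 < norm y" and "norm y < 1"
        using a norm_triangle_ineq2[of a y] norm_triangle_ineq[of a "y - a"]
        by (auto simp: dist_norm norm_minus_commute)
      then have "1 powr (- \<alpha>) \<le> norm y powr (- \<alpha>)"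
        using alpha_pos by (intro powr_mono2') auto
      then show ?thesis using True by (simp add: norm_weight_def)
    qed simp
  qed
  then have "enn2real (ennreal V) \<le> enn2real (weight_integral \<alpha> a (1/4))"
    using weight_integral_less_top[of a "1/4"]
    by (intro enn2real_mono) (auto simp: V_def emeasure_lebesgue_ball)
  then have "0 < enn2real (weight_integral \<alpha> a (1/4))"
    using \<open>0 < V\<close> by simp
  then have "0 < morrey_local u p q a (1/4)"
    using \<open>0 < V\<close> by (simp add: morrey_local_eq V_def)
  also have "\<dots> \<le> morrey_norm u p q"
    by (rule morrey_local_le_morrey_norm) simp
  finally show ?thesis .
qed

lemma morrey_norm_le_if_eq_on_unit_ball:
  assumes uv: "\<And>y. norm y < 1 \<Longrightarrow> v y = u y"
  shows "morrey_norm u p q \<le> morrey_norm v p q"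
  unfolding morrey_norm_def
proof (intro SUP_least)
  fix a :: 'a and r :: real
  assume "r \<in> {0<..}"
  then have r: "0 < r" by simp
  define t where "t = 1 / (norm a + r)"
  have t: "0 < t" using r by (simp add: t_def add_nonneg_pos)
  have "t * norm a + t * r = t * (norm a + r)"
    by (simp add: algebra_simps)
  also have "\<dots> = 1"
  proof -
    have "0 < norm a + r"
      using r norm_ge_zero[of a] by linarith
    then show ?thesis by (simp add: t_def)
  qed
  finally have "t * norm a + t * r = 1" .
  then have inside: "norm y < 1" if "y \<in> ball (t *\<^sub>R a) (t * r)" for y
    using that t norm_triangle_lt[of "t *\<^sub>R a" "y - t *\<^sub>R a" 1]
    by (auto simp: dist_norm norm_minus_commute)
  have "morrey_local u p q a r = morrey_local u p q (t *\<^sub>R a) (t * r)"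
    by (rule morrey_local_scaleR[OF t r, symmetric])
  also have "\<dots> = morrey_local v p q (t *\<^sub>R a) (t * r)"
  proof -
    have "local_integral u p (t *\<^sub>R a) (t * r) = local_integral v p (t *\<^sub>R a) (t * r)"
      unfolding local_integral_def by (intro nn_integral_cong) (auto simp: indicator_def uv inside)
    then show ?thesis
      by (simp add: morrey_local_conv_local_integral)
  qed
  also have "\<dots> \<le> morrey_norm v p q"
    using t r by (intro morrey_local_le_morrey_norm) simp
  finally show "morrey_local u p q a r \<le> (SUP a. SUP r\<in>{0<..}. morrey_local v p q a r)"
    by (simp add: morrey_norm_def)
qed

lemma weight_integral_le_if_eq_outside_unit_ball:
  assumes uv: "\<And>y. 1 \<le> norm y \<Longrightarrow> v y = u y"
  shows "weight_integral \<alpha> a r \<le> local_integral v p a r + weight_integral \<alpha> (0::'a) 1"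
proof -
  let ?outer = "\<integral>\<^sup>+ y\<in>ball a r. norm_weight \<alpha> y * indicator (- ball 0 1) y \<partial>lebesgue"
  have "?outer \<le> local_integral v p a r"
    unfolding local_integral_def
    by (intro nn_integral_mono) (auto simp: indicator_def uv power_profile)
  then show ?thesis
    using weight_integral_le_outer_part[of \<alpha> a r] by (simp add: add_right_mono order.trans)
qed

text \<open>On the dilated ball \<open>tB\<close>, \<open>v\<close> agrees with \<open>u\<close> off the unit ball, which carries weight
  \<open>c\<close>; scaling back to \<open>B\<close>, this costs at most \<open>c t^(\<alpha>-d)\<close> in the integral.\<close>

lemma morrey_local_dilated_lower_bound:
  assumes uv: "\<And>y. 1 \<le> norm y \<Longrightarrow> v y = u y" and t: "0 < t" and r: "0 < r"
  shows "ennreal (measure lebesgue (ball a r) powr (1/q - 1/p) *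
           max 0 (enn2real (weight_integral \<alpha> a r)
                  - enn2real (weight_integral \<alpha> (0::'a) 1) * t powr (\<alpha> - real DIM('a))) powr (1/p))
         \<le> morrey_local v p q (t *\<^sub>R a) (t * r)"
proof (cases "local_integral v p (t *\<^sub>R a) (t * r) = \<infinity>")
  case False
  define d where "d = real DIM('a)"
  define e where "e = 1/q - 1/p"
  define V where "V = measure lebesgue (ball a r)"
  define A where "A = enn2real (weight_integral \<alpha> a r)"
  define c where "c = enn2real (weight_integral \<alpha> (0::'a) 1)"
  define j where "j = enn2real (local_integral v p (t *\<^sub>R a) (t * r))"
  have nonneg: "0 \<le> V" "0 \<le> A" "0 \<le> c" "0 \<le> j"
    by (simp_all add: V_def A_def c_def j_def)
  have A: "weight_integral \<alpha> a r = ennreal A"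
    using weight_integral_less_top[of a r] by (simp add: A_def less_top)
  have c: "weight_integral \<alpha> (0::'a) 1 = ennreal c"
    using weight_integral_less_top[of 0 1] by (simp add: c_def less_top)
  have j: "local_integral v p (t *\<^sub>R a) (t * r) = ennreal j"
    using False by (simp add: j_def less_top)
  have "ennreal (t powr (d - \<alpha>) * A) = weight_integral \<alpha> (t *\<^sub>R a) (t * r)"
    using t nonneg by (simp add: weight_integral_scaleR A d_def ennreal_mult)
  also have "\<dots> \<le> local_integral v p (t *\<^sub>R a) (t * r) + weight_integral \<alpha> (0::'a) 1"
    using uv by (rule weight_integral_le_if_eq_outside_unit_ball)
  also have "\<dots> = ennreal (j + c)"
    using nonneg by (simp add: j c ennreal_plus)
  finally have "t powr (d - \<alpha>) * A \<le> j + c"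
    using nonneg by (metis ennreal_le_iff add_nonneg_nonneg)
  then have "A \<le> (j + c) / t powr (d - \<alpha>)"
    using t by (simp add: pos_le_divide_eq mult.commute)
  also have "\<dots> = (j + c) * t powr (\<alpha> - d)"
    by (simp add: divide_inverse powr_minus[symmetric])
  finally have "max 0 (A - c * t powr (\<alpha> - d)) \<le> j * t powr (\<alpha> - d)"
    using nonneg by (simp add: algebra_simps)
  then have "max 0 (A - c * t powr (\<alpha> - d)) powr (1/p) \<le> (j * t powr (\<alpha> - d)) powr (1/p)"
    using p_pos by (intro powr_mono2) auto
  also have "\<dots> = (t ^ DIM('a)) powr e * j powr (1/p)"
    using t nonneg exponent_identity
    by (simp add: powr_mult powr_powr powr_realpow[symmetric] d_def e_def mult.commute)
  finally have "V powr e * max 0 (A - c * t powr (\<alpha> - d)) powr (1/p)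
      \<le> V powr e * ((t ^ DIM('a)) powr e * j powr (1/p))"
    by (rule mult_left_mono) simp
  also have "\<dots> = (t ^ DIM('a) * V) powr e * j powr (1/p)"
    using t nonneg by (simp add: powr_mult mult_ac)
  finally have "V powr e * max 0 (A - c * t powr (\<alpha> - d)) powr (1/p)
      \<le> (t ^ DIM('a) * V) powr e * j powr (1/p)" .
  then show ?thesis
    using False measure_lebesgue_ball_scaleR[OF t less_imp_le[OF r], of a]
    by (simp add: morrey_local_conv_local_integral V_def A_def c_def j_def d_def e_def ennreal_leI)
qed (simp add: morrey_local_conv_local_integral)

lemma morrey_norm_le_if_eq_outside_unit_ball:
  assumes uv: "\<And>y. 1 \<le> norm y \<Longrightarrow> v y = u y"
  shows "morrey_norm u p q \<le> morrey_norm v p q"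
  unfolding morrey_norm_def[of u]
proof (intro SUP_least)
  fix a :: 'a and r :: real
  assume "r \<in> {0<..}"
  then have r: "0 < r" by simp
  define V where "V = measure lebesgue (ball a r) powr (1/q - 1/p)"
  define A where "A = enn2real (weight_integral \<alpha> a r)"
  define c where "c = enn2real (weight_integral \<alpha> (0::'a) 1)"
  define G where "G t = V * max 0 (A - c * t powr (\<alpha> - real DIM('a))) powr (1/p)" for t
  have "((\<lambda>t. max 0 (A - c * t powr (\<alpha> - real DIM('a)))) \<longlongrightarrow> max 0 (A - c * 0)) at_top"
    by (intro tendsto_intros tendsto_neg_powr filterlim_ident) (use alpha_less_DIM in simp)
  then have "(G \<longlongrightarrow> V * A powr (1/p)) at_top"
    unfolding G_def using p_pos by (auto simp: A_def intro!: tendsto_mult_left tendsto_powr2)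
  moreover have "\<forall>\<^sub>F t in at_top. ennreal (G t) \<le> morrey_norm v p q"
    using eventually_gt_at_top[of 0]
  proof eventually_elim
    case (elim t)
    then show ?case
      using morrey_local_dilated_lower_bound[OF uv elim r, of a]
        morrey_local_le_morrey_norm[of "t * r" v p q "t *\<^sub>R a"] r
      by (simp add: G_def V_def A_def c_def)
  qed
  ultimately have "ennreal (V * A powr (1/p)) \<le> morrey_norm v p q"
    by (intro tendsto_le[OF _ tendsto_const tendsto_ennrealI]) auto
  then show "morrey_local u p q a r \<le> morrey_norm v p q"
    by (simp add: morrey_local_eq V_def A_def)
qed

end

theorem mainTheorem4:
  fixes p q :: real and f g h k :: "'a::euclidean_space \<Rightarrow> real"
  assumes "1 \<le> p" and "p < q"
    and "f = (\<lambda>x. norm x powr (- real DIM('a) / q))"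
    and "g = (\<lambda>x. (if norm x < 1 then 1 else 0) * f x)"
    and "h = (\<lambda>x. f x - g x)"
    and "k = (\<lambda>x. - f x + 2 * g x)"
  shows "morrey_norm f p q = morrey_norm g p q \<and> morrey_norm g p q = morrey_norm h p q
         \<and> morrey_norm h p q = morrey_norm k p q
         \<and> 0 < morrey_norm f p q \<and> morrey_norm f p q < \<infinity>"
proof -
  interpret critical_power f p q "real DIM('a) * p / q"
    using assms(1-3) by unfold_locales (auto simp: norm_weight_def powr_powr)
  have "morrey_norm g p q = morrey_norm f p q"
    using assms(4) by (intro antisym morrey_norm_mono[OF p_pos] morrey_norm_le_if_eq_on_unit_ball) auto
  moreover have "morrey_norm h p q = morrey_norm f p q"
    using assms(4,5) by (intro antisym morrey_norm_mono[OF p_pos] morrey_norm_le_if_eq_outside_unit_ball) auto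
  moreover have "morrey_norm k p q = morrey_norm f p q"
    using assms(4,6) by (intro morrey_norm_cong_abs) auto
  ultimately show ?thesis
    using morrey_norm_pos morrey_norm_finite by simp
qed

end
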